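(* Let $\alpha>0$ be a constant and let $n$ be an integer with $n\ge 10+4\alpha$. Then the solution curve of the generalized Gelfand problem \[ u''+\frac{n-1}{r}u'+\lambda r^{\alpha}e^{u}=0 \quad (0<r<1), \qquad u'(0)=0,\quad u(1)=0, \] admits at most two turns. That is, with $w$ and $\lambda(t)$ as in the context, $\lambda'(t)$ changes sign at most twice on $(0,\infty)$.
   Context: Here $\lambda>0$ is a parameter. Let $w(t)$ be the solution of the initial value problem \[ w''+\frac{n-1}{t}w'+t^{\alpha}e^{w}=0, \qquad w(0)=0,\quad w'(0)=0 \qquad (t>0). \] This solution is negative and decreasing and is defined for all $t>0$. For each $t>0$, the function $u(r)=w(tr)-w(t)$ solves the boundary value problem with $\lambda=\lambda(t):=t^{\alpha+2}e^{w(t)}$, and all solutions arise in this way. The solution curve is the parametrized curve \[ t\mapsto(\lambda,u(0))=\bigl(t^{\alpha+2}e^{w(t)},\,-w(t)\bigr), \qquad t\in(0,\infty). \] A turn of the curve is a change of sign of $\lambda'(t)$. *)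

theory Defs
  imports "HOL-Analysis.Analysis"
begin

definition gelfand_lambda :: "real \<Rightarrow> (real \<Rightarrow> real) \<Rightarrow> real \<Rightarrow> real" where
  "gelfand_lambda \<alpha> w t = t powr (\<alpha> + 2) * exp (w t)"

definition at_most_two_sign_changes :: "(real \<Rightarrow> real) \<Rightarrow> real set \<Rightarrow> bool" where
  "at_most_two_sign_changes f S \<longleftrightarrow>
     \<not> (\<exists>t1 t2 t3 t4. t1 \<in> S \<and> t2 \<in> S \<and> t3 \<in> S \<and> t4 \<in> S \<and>
          t1 < t2 \<and> t2 < t3 \<and> t3 < t4 \<and>
          f t1 * f t2 < 0 \<and> f t2 * f t3 < 0 \<and> f t3 * f t4 < 0)"

end

theory Submission
  imports Defs
begin

text \<open>With \<open>q = \<lambda>(t)\<close> and \<open>v = t w' + \<alpha> + 2 = t q'/q\<close>, the equation becomes the planar system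
  \<open>t q' = q v\<close>, \<open>t v' = Q - N v - q\<close> with \<open>N = n - 2\<close>, \<open>Q = N (\<alpha> + 2)\<close>, starting at
  \<open>(v, q) = (\<alpha> + 2, 0)\<close>. If \<open>n \<ge> 10 + 4\<alpha>\<close> then \<open>N\<^sup>2 \<ge> 4Q\<close>, so \<open>k\<^sup>2 - N k + Q = 0\<close> has a root
  \<open>0 < k \<le> N/2\<close>, and the triangle \<open>v > 0\<close>, \<open>q < Q - k v\<close> is invariant: on the side \<open>q = Q - k v\<close>
  the flow satisfies \<open>t (q + k v)' = -k v\<^sup>2\<close>, on the side \<open>v = 0\<close> it has \<open>t v' = Q - q > 0\<close>, and the
  corner \<open>(0, Q)\<close> is an equilibrium that cannot be reached in finite time (Gronwall).
  Hence \<open>v > 0\<close> throughout, i.e. \<open>\<lambda>' > 0\<close>: the curve has no turn at all.\<close>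

lemma continuous_on_first_nonpos:
  fixes f :: "real \<Rightarrow> real"
  assumes "continuous_on {a..b} f" "f a > 0" "f b \<le> 0" "a \<le> b"
  shows "\<exists>c\<in>{a<..b}. f c = 0 \<and> (\<forall>x\<in>{a..<c}. f x > 0)"
proof -
  define K where "K = {x\<in>{a..b}. f x \<le> 0}"
  have "K = {a..b} \<inter> f -` {..0}" unfolding K_def by auto
  then have "closed K" using continuous_closed_preimage[OF assms(1)] by simp
  moreover have K_ne: "K \<noteq> {}" using assms unfolding K_def by auto
  moreover have K_bdd: "bdd_below K" unfolding K_def by (auto intro: bdd_belowI[of _ a])
  ultimately have cK: "Inf K \<in> K" using closed_contains_Inf by blast
  define c where "c = Inf K"
  have pos_below: "\<forall>x\<in>{a..<c}. f x > 0"
  proof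
    fix x assume x: "x \<in> {a..<c}"
    have "x \<notin> K" using x cInf_lower[OF _ K_bdd] c_def by fastforce
    moreover have "x \<le> b" using x cK c_def K_def by auto
    ultimately show "f x > 0" using x unfolding K_def by auto
  qed
  have ac: "a < c" using cK assms(2) K_def c_def by (auto simp: order.order_iff_strict)
  have "f c \<ge> 0"
  proof -
    have "(f \<longlongrightarrow> f c) (at c within {a..b})"
      using assms(1) cK K_def c_def by (auto simp: continuous_on_def)
    then have "(f \<longlongrightarrow> f c) (at c within {a..<c})"
      by (rule tendsto_within_subset) (use cK K_def c_def in auto)
    moreover have "at c within {a..<c} \<noteq> bot"
      using ac by (simp add: at_within_eq_bot_iff closure_atLeastLessThan)
    moreover have "eventually (\<lambda>x. f x \<ge> 0) (at c within {a..<c})"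
      using pos_below by (auto simp: eventually_at_filter less_imp_le)
    ultimately show ?thesis using tendsto_lowerbound by blast
  qed
  then show ?thesis using cK K_def c_def pos_below ac by force
qed

lemma DERIV_nonpos_at_first_nonpos:
  fixes f :: "real \<Rightarrow> real"
  assumes "DERIV f c :> D" "\<forall>x\<in>{a..<c}. f x > 0" "f c \<le> 0" "a < c"
  shows "D \<le> 0"
proof (rule ccontr)
  assume "\<not> D \<le> 0"
  then obtain d where d: "d > 0" "\<forall>h>0. h < d \<longrightarrow> f (c - h) < f c"
    using DERIV_pos_inc_left[OF assms(1)] by force
  define h where "h = min (d/2) (c - a)"
  have "h > 0" "h < d" using d assms(4) by (auto simp: h_def)
  then have "f (c - h) < f c" using d by auto
  moreover have "c - h \<in> {a..<c}" using \<open>h > 0\<close> by (auto simp: h_def)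
  ultimately show False using assms by force
qed

lemma DERIV_ge_linear_imp_exp_mono:
  fixes f f' :: "real \<Rightarrow> real"
  assumes "a \<le> b"
    and "\<And>x. x \<in> {a..b} \<Longrightarrow> (f has_real_derivative f' x) (at x)"
    and "\<And>x. x \<in> {a..b} \<Longrightarrow> f' x \<ge> - C * f x"
  shows "f a * exp (C * a) \<le> f b * exp (C * b)"
proof (rule DERIV_nonneg_imp_nondecreasing[OF assms(1)])
  fix x assume x: "a \<le> x" "x \<le> b"
  have "((\<lambda>x. f x * exp (C * x)) has_real_derivative
          f' x * exp (C * x) + f x * (exp (C * x) * C)) (at x)"
    by (intro derivative_eq_intros) (use x assms(2) in auto)
  moreover have "f' x * exp (C * x) + f x * (exp (C * x) * C) = exp (C * x) * (f' x + C * f x)"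
    by (simp add: algebra_simps)
  moreover have "f' x + C * f x \<ge> 0" using assms(3)[of x] x by simp
  ultimately show "\<exists>y. ((\<lambda>x. f x * exp (C * x)) has_real_derivative y) (at x) \<and> 0 \<le> y"
    by auto
qed

text \<open>The energy \<open>v\<^sup>2 + y\<^sup>2\<close>, \<open>y = q - Q\<close>, has derivative \<open>(-2 N v\<^sup>2 + 2 (q - 1) v y) / t\<close>
  along the system.\<close>

lemma energy_derivative_lower_bound:
  fixes v y q N Q t a :: real
  assumes "0 \<le> q" "q \<le> Q" "0 \<le> N" "0 < a" "a \<le> t"
  shows "(-2 * N * v\<^sup>2 + 2 * (q - 1) * v * y) / t \<ge> - ((2 * N + 1 + Q) / a) * (v\<^sup>2 + y\<^sup>2)"
proof -
  define E where "E = v\<^sup>2 + y\<^sup>2"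
  have "\<bar>2 * v * y\<bar> \<le> E"
    using sum_squares_bound[of v y] sum_squares_bound[of v "-y"] by (auto simp: E_def abs_if)
  moreover have "\<bar>q - 1\<bar> \<le> 1 + Q" using assms by auto
  ultimately have "\<bar>(q - 1) * (2 * v * y)\<bar> \<le> (1 + Q) * E"
    unfolding abs_mult by (intro mult_mono) auto
  then have "2 * (q - 1) * v * y \<ge> - (1 + Q) * E" unfolding abs_le_iff by (simp add: algebra_simps)
  moreover have "N * v\<^sup>2 \<le> N * E" using assms(3) by (simp add: E_def mult_left_mono)
  ultimately have num: "-2 * N * v\<^sup>2 + 2 * (q - 1) * v * y \<ge> - ((2 * N + 1 + Q) * E)"
    by (simp add: algebra_simps)
  let ?C = "2 * N + 1 + Q"
  have "(-2 * N * v\<^sup>2 + 2 * (q - 1) * v * y) / t \<ge> - (?C * E) / t"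
    using num assms by (intro divide_right_mono) auto
  moreover have "- (?C * E) / t = - (?C * E / t)" by (simp only: minus_divide_left)
  moreover have "?C * E / t \<le> ?C * E / a"
    using assms by (intro divide_left_mono) (auto simp: E_def)
  moreover have "- (?C / a) * E = - (?C * E / a)" by simp
  ultimately show ?thesis unfolding E_def[symmetric] by linarith
qed

lemma phase_plane_equilibrium_unreachable:
  fixes q v :: "real \<Rightarrow> real" and N Q a c :: real
  assumes "0 \<le> N" "0 < a" "a \<le> c"
    and dq: "\<And>t. t \<in> {a..c} \<Longrightarrow> (q has_real_derivative q t * v t / t) (at t)"
    and dv: "\<And>t. t \<in> {a..c} \<Longrightarrow> (v has_real_derivative (Q - N * v t - q t) / t) (at t)"
    and q_bounds: "\<And>t. t \<in> {a..c} \<Longrightarrow> 0 \<le> q t \<and> q t \<le> Q"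
    and "v c = 0" "q c = Q"
  shows "v a = 0 \<and> q a = Q"
proof -
  define G where "G t = (v t)\<^sup>2 + (q t - Q)\<^sup>2" for t
  define C where "C = (2 * N + 1 + Q) / a"
  have "G a * exp (C * a) \<le> G c * exp (C * c)"
  proof (rule DERIV_ge_linear_imp_exp_mono[OF \<open>a \<le> c\<close>])
    fix t assume t: "t \<in> {a..c}"
    then have "t > 0" using \<open>0 < a\<close> by auto
    have "(G has_real_derivative
            2 * v t * ((Q - N * v t - q t) / t) + 2 * (q t - Q) * (q t * v t / t)) (at t)"
      unfolding G_def
      by (rule derivative_eq_intros dv dq t refl | use \<open>t > 0\<close> in \<open>simp add: field_simps\<close>)+
    also have "2 * v t * ((Q - N * v t - q t) / t) + 2 * (q t - Q) * (q t * v t / t)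
             = (-2 * N * (v t)\<^sup>2 + 2 * (q t - 1) * v t * (q t - Q)) / t"
      using \<open>t > 0\<close> by (simp add: field_simps power2_eq_square)
    finally show "(G has_real_derivative \<dots>) (at t)" .
    show "(-2 * N * (v t)\<^sup>2 + 2 * (q t - 1) * v t * (q t - Q)) / t \<ge> - C * G t"
      unfolding C_def G_def
      by (rule energy_derivative_lower_bound) (use q_bounds[OF t] t assms(1,2) in auto)
  qed
  also have "G c = 0" using assms by (simp add: G_def)
  finally have "G a \<le> 0" by (simp add: mult_le_0_iff)
  then show ?thesis by (simp add: G_def sum_power2_le_zero_iff)
qed

text \<open>On the side \<open>q = Q - k v\<close> of the triangle, the root property of \<open>k\<close> gives
  \<open>t (q + k v)' = q v + k (Q - N v - q) = -k v\<^sup>2\<close>, so the flow cannot leave through that side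
  except at the corner \<open>v = 0\<close>.\<close>

lemma phase_plane_first_exit:
  fixes q v :: "real \<Rightarrow> real" and N Q k a c :: real
  assumes "k > 0" "k\<^sup>2 - N * k + Q = 0" "0 < a" "a < c"
    and dq: "\<And>t. t > 0 \<Longrightarrow> (q has_real_derivative q t * v t / t) (at t)"
    and dv: "\<And>t. t > 0 \<Longrightarrow> (v has_real_derivative (Q - N * v t - q t) / t) (at t)"
    and v_pos: "\<forall>x\<in>{a..<c}. v x > 0" and "v c = 0"
    and below_side: "q a - Q + k * v a < 0"
  shows "q c = Q"
proof -
  define \<phi> where "\<phi> t = Q - q t - k * v t" for t
  have "c > 0" using assms by simp
  have "(Q - N * v c - q c) / c \<le> 0"
    using DERIV_nonpos_at_first_nonpos[OF dv[OF \<open>c > 0\<close>] v_pos] assms by simp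
  then have "\<phi> c \<le> 0" using \<open>c > 0\<close> \<open>v c = 0\<close> by (simp add: \<phi>_def divide_le_0_iff)
  moreover have "continuous_on {a..c} \<phi>"
    unfolding \<phi>_def using assms(3)
    by (intro continuous_intros continuous_at_imp_continuous_on ballI
        DERIV_isCont[OF dq] DERIV_isCont[OF dv]) auto
  moreover have "\<phi> a > 0" using below_side by (simp add: \<phi>_def)
  ultimately obtain c' where c': "c' \<in> {a<..c}" "\<phi> c' = 0" "\<forall>x\<in>{a..<c'}. \<phi> x > 0"
    using continuous_on_first_nonpos[of a c \<phi>] \<open>a < c\<close> by auto
  then have "c' > 0" using assms(3) by auto
  have "(\<phi> has_real_derivative - (q c' * v c' / c') - k * ((Q - N * v c' - q c') / c')) (at c')"
    using DERIV_diff[OF DERIV_diff[OF DERIV_const dq] DERIV_cmult[OF dv, of _ k], of c' Q]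
      \<open>c' > 0\<close> unfolding \<phi>_def by simp
  then have "- (q c' * v c' / c') - k * ((Q - N * v c' - q c') / c') \<le> 0"
    by (rule DERIV_nonpos_at_first_nonpos) (use c' in auto)
  moreover have "- (q c' * v c' / c') - k * ((Q - N * v c' - q c') / c') = k * (v c')\<^sup>2 / c'"
  proof -
    have Q_eq: "Q = N * k - k\<^sup>2" using assms(2) by simp
    have "q c' = N * k - k\<^sup>2 - k * v c'" using c'(2) by (simp add: \<phi>_def Q_eq)
    then show ?thesis
      unfolding Q_eq using \<open>c' > 0\<close> by (simp add: divide_simps) (simp add: algebra_simps power2_eq_square)
  qed
  ultimately have "k * (v c')\<^sup>2 / c' \<le> 0" by simp
  then have "v c' = 0" using \<open>k > 0\<close> \<open>c' > 0\<close> by (simp add: divide_le_0_iff mult_le_0_iff)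
  then have "c' = c" using c'(1) v_pos by (metis atLeastLessThan_iff greaterThanAtMost_iff
        less_eq_real_def less_irrefl)
  then show ?thesis using c'(2) \<open>v c = 0\<close> by (simp add: \<phi>_def)
qed

lemma phase_plane_v_pos:
  fixes q v :: "real \<Rightarrow> real" and N Q k v0 q0 t :: real
  assumes "0 \<le> N" "k > 0" "k\<^sup>2 - N * k + Q = 0"
    and dq: "\<And>t. t > 0 \<Longrightarrow> (q has_real_derivative q t * v t / t) (at t)"
    and dv: "\<And>t. t > 0 \<Longrightarrow> (v has_real_derivative (Q - N * v t - q t) / t) (at t)"
    and q_nonneg: "\<And>t. t > 0 \<Longrightarrow> q t \<ge> 0"
    and v_lim: "(v \<longlongrightarrow> v0) (at_right 0)" and q_lim: "(q \<longlongrightarrow> q0) (at_right 0)"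
    and "v0 > 0" "q0 - Q + k * v0 < 0" "t > 0"
  shows "v t > 0"
proof (rule ccontr)
  assume "\<not> v t > 0"
  have "((\<lambda>t. q t - Q + k * v t) \<longlongrightarrow> q0 - Q + k * v0) (at_right 0)"
    by (intro tendsto_intros v_lim q_lim)
  from order_tendstoD(2)[OF this assms(10)] order_tendstoD(1)[OF v_lim \<open>v0 > 0\<close>]
  have "eventually (\<lambda>s. v s > 0 \<and> q s - Q + k * v s < 0) (at_right 0)"
    by eventually_elim simp
  then obtain a where a: "0 < a" "a < t" "v a > 0" "q a - Q + k * v a < 0"
    using \<open>t > 0\<close> unfolding eventually_at_right_field
    by (metis field_lbound_gt_zero less_eq_real_def)
  have "continuous_on {a..t} v"
    using a by (intro continuous_at_imp_continuous_on ballI DERIV_isCont[OF dv]) auto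
  then obtain c where c: "c \<in> {a<..t}" "v c = 0" "\<forall>x\<in>{a..<c}. v x > 0"
    using continuous_on_first_nonpos[of a t v] a \<open>\<not> v t > 0\<close> by auto
  then have "q c = Q"
    using phase_plane_first_exit[OF assms(2,3) \<open>0 < a\<close> _ dq dv] a by auto
  have q_mono: "q x \<le> q c" if "x \<in> {a..c}" for x
  proof (rule DERIV_nonneg_imp_nondecreasing[of x c q])
    fix y assume "x \<le> y" "y \<le> c"
    then have "y > 0" "v y \<ge> 0" using that a c by (auto intro: less_imp_le)
    then show "\<exists>d. (q has_real_derivative d) (at y) \<and> 0 \<le> d"
      using dq q_nonneg by (metis divide_nonneg_pos zero_le_mult_iff)
  qed (use that in auto)
  have "v a = 0 \<and> q a = Q"
  proof (rule phase_plane_equilibrium_unreachable[OF \<open>0 \<le> N\<close> \<open>0 < a\<close>])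
    show "q x \<ge> 0 \<and> q x \<le> Q" if "x \<in> {a..c}" for x
      using q_nonneg q_mono[OF that] that a \<open>q c = Q\<close> by auto
  qed (use a c \<open>q c = Q\<close> dq dv in auto)
  then show False using a by simp
qed

lemma quadratic_smaller_root:
  fixes N Q :: real
  assumes "0 < Q" "4 * Q \<le> N\<^sup>2" "0 < N"
  obtains k where "0 < k" "k \<le> N / 2" "k\<^sup>2 - N * k + Q = 0"
proof
  define k where "k = (N - sqrt (N\<^sup>2 - 4 * Q)) / 2"
  have "sqrt (N\<^sup>2 - 4 * Q) < sqrt (N\<^sup>2)" using assms(1) by (intro real_sqrt_less_mono) simp
  then show "0 < k" using assms(3) by (simp add: k_def)
  show "k \<le> N / 2" using assms(2) by (simp add: k_def)
  have "(sqrt (N\<^sup>2 - 4 * Q))\<^sup>2 = N\<^sup>2 - 4 * Q" by (rule real_sqrt_pow2) (use assms(2) in simp)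
  then show "k\<^sup>2 - N * k + Q = 0" by (simp add: k_def power2_eq_square field_simps)
qed

lemma joseph_lundgren_root:
  fixes \<alpha> :: real and n :: nat
  assumes "\<alpha> > 0" "real n \<ge> 10 + 4 * \<alpha>"
  obtains k where "0 < k" "k < real n - 2" "k\<^sup>2 - (real n - 2) * k + (real n - 2) * (\<alpha> + 2) = 0"
proof -
  define N where "N = real n - 2"
  have "N > 0" "N * (\<alpha> + 2) > 0" using assms by (auto simp: N_def)
  moreover have "4 * (N * (\<alpha> + 2)) \<le> N\<^sup>2"
  proof -
    have "N\<^sup>2 - 4 * (N * (\<alpha> + 2)) = N * (N - 4 * \<alpha> - 8)" by (simp add: power2_eq_square algebra_simps)
    moreover have "N - 4 * \<alpha> - 8 \<ge> 0" using assms(2) by (simp add: N_def)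
    ultimately show ?thesis using \<open>N > 0\<close> by (metis diff_ge_0_iff_ge less_imp_le mult_nonneg_nonneg)
  qed
  ultimately obtain k where "0 < k" "k \<le> N / 2" "k\<^sup>2 - N * k + N * (\<alpha> + 2) = 0"
    using quadratic_smaller_root by blast
  with \<open>N > 0\<close> that show ?thesis unfolding N_def by simp
qed

lemma at_most_two_sign_changes_if_pos:
  assumes "\<And>t. t \<in> S \<Longrightarrow> f t > 0"
  shows "at_most_two_sign_changes f S"
  using assms unfolding at_most_two_sign_changes_def
  by (metis mult_pos_pos not_less_iff_gr_or_eq)

lemma gelfand_lambda_has_real_derivative:
  assumes "t > 0" "(w has_real_derivative d) (at t)"
  shows "(gelfand_lambda \<alpha> w has_real_derivative
           gelfand_lambda \<alpha> w t * (t * d + \<alpha> + 2) / t) (at t)"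
proof -
  have "(gelfand_lambda \<alpha> w has_real_derivative
          (\<alpha> + 2) * t powr (\<alpha> + 2 - 1) * exp (w t) + t powr (\<alpha> + 2) * (exp (w t) * d)) (at t)"
    unfolding gelfand_lambda_def[abs_def] using assms
    by (intro derivative_eq_intros) auto
  moreover have "t powr (\<alpha> + 2) = t powr (\<alpha> + 1) * t"
    using powr_add[of t "\<alpha> + 1" 1] \<open>t > 0\<close> by (simp add: add.assoc)
  then have "(\<alpha> + 2) * t powr (\<alpha> + 2 - 1) * exp (w t) + t powr (\<alpha> + 2) * (exp (w t) * d)
      = gelfand_lambda \<alpha> w t * (t * d + \<alpha> + 2) / t"
    using \<open>t > 0\<close> by (simp add: gelfand_lambda_def field_simps)
  ultimately show ?thesis by simp
qed

lemma gelfand_v_has_real_derivative: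
  fixes n :: nat
  assumes "t > 0" "(w' has_real_derivative d) (at t)"
    and "d + (real n - 1) / t * w' t + t powr \<alpha> * exp (w t) = 0"
  shows "((\<lambda>t. t * w' t + \<alpha> + 2) has_real_derivative
           ((real n - 2) * (\<alpha> + 2) - (real n - 2) * (t * w' t + \<alpha> + 2) - gelfand_lambda \<alpha> w t) / t)
         (at t)"
proof -
  have "((\<lambda>t. t * w' t + \<alpha> + 2) has_real_derivative w' t + t * d) (at t)"
    using assms(2) by (auto intro!: derivative_eq_intros)
  moreover have "t powr (\<alpha> + 2) = t * t * t powr \<alpha>"
    using \<open>t > 0\<close> by (simp add: powr_add power2_eq_square)
  moreover have "d = - (real n - 1) / t * w' t - t powr \<alpha> * exp (w t)"
    using assms(3) by linarith
  ultimately show ?thesis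
    using \<open>t > 0\<close> by (simp add: gelfand_lambda_def field_simps)
qed

lemma gelfand_initial_limits:
  assumes "\<alpha> + 2 > 0"
    and "(w has_real_derivative w' 0) (at 0 within {0..})" "continuous_on {0..} w'"
    and "w 0 = 0" "w' 0 = 0"
  shows "((\<lambda>t. t * w' t + \<alpha> + 2) \<longlongrightarrow> \<alpha> + 2) (at_right 0)"
    and "(gelfand_lambda \<alpha> w \<longlongrightarrow> 0) (at_right 0)"
proof -
  have "(w' \<longlongrightarrow> w' 0) (at 0 within {0..})"
    using assms(3) by (simp add: continuous_on_def)
  then have "(w' \<longlongrightarrow> w' 0) (at_right 0)"
    by (rule tendsto_within_subset) auto
  then show "((\<lambda>t. t * w' t + \<alpha> + 2) \<longlongrightarrow> \<alpha> + 2) (at_right 0)"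
    using assms(5) by (auto intro!: tendsto_eq_intros)
  have "(w \<longlongrightarrow> w 0) (at 0 within {0..})"
    using DERIV_continuous[OF assms(2)] by (simp add: continuous_within)
  then have "(w \<longlongrightarrow> w 0) (at_right 0)"
    by (rule tendsto_within_subset) auto
  moreover have "((\<lambda>t. t powr (\<alpha> + 2)) \<longlongrightarrow> 0) (at_right 0)"
    using assms(1) by (intro tendsto_zero_powrI) (auto intro: eventually_at_rightI[of 0 1])
  ultimately show "(gelfand_lambda \<alpha> w \<longlongrightarrow> 0) (at_right 0)"
    unfolding gelfand_lambda_def[abs_def] using assms(4) tendsto_mult tendsto_exp by fastforce
qed

theorem theorem3p2:
  fixes \<alpha> :: real and n :: nat and w w' w'' :: "real \<Rightarrow> real"
  assumes alpha_pos: "\<alpha> > 0"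
    and n_ge: "real n \<ge> 10 + 4 * \<alpha>"
    and w_deriv: "\<And>t. t \<ge> 0 \<Longrightarrow> (w has_real_derivative w' t) (at t within {0..})"
    and w'_cont: "continuous_on {0..} w'"
    and w'_deriv: "\<And>t. t > 0 \<Longrightarrow> (w' has_real_derivative w'' t) (at t)"
    and ode: "\<And>t. t > 0 \<Longrightarrow> w'' t + (real n - 1) / t * w' t + t powr \<alpha> * exp (w t) = 0"
    and w0: "w 0 = 0"
    and w'0: "w' 0 = 0"
  shows "at_most_two_sign_changes (deriv (gelfand_lambda \<alpha> w)) {0<..}"
proof (rule at_most_two_sign_changes_if_pos)
  obtain k where k: "0 < k" "k < real n - 2" "k\<^sup>2 - (real n - 2) * k + (real n - 2) * (\<alpha> + 2) = 0"
    using joseph_lundgren_root[OF alpha_pos n_ge] .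
  have dw: "(w has_real_derivative w' t) (at t)" if "t > 0" for t
    using w_deriv[of t] that at_within_interior[of t "{0..}"] by simp
  have dlambda: "(gelfand_lambda \<alpha> w has_real_derivative
      gelfand_lambda \<alpha> w t * (t * w' t + \<alpha> + 2) / t) (at t)" if "t > 0" for t
    by (rule gelfand_lambda_has_real_derivative[OF that dw[OF that]])
  have dv: "((\<lambda>t. t * w' t + \<alpha> + 2) has_real_derivative ((real n - 2) * (\<alpha> + 2)
      - (real n - 2) * (t * w' t + \<alpha> + 2) - gelfand_lambda \<alpha> w t) / t) (at t)" if "t > 0" for t
    by (rule gelfand_v_has_real_derivative[OF that w'_deriv[OF that]]) (rule ode[OF that])
  have "n \<ge> 2" using k(1,2) by linarith
  fix t :: real assume "t \<in> {0<..}"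
  then have "t > 0" by simp
  have "t * w' t + \<alpha> + 2 > 0"
    using phase_plane_v_pos[OF _ k(1,3) dlambda dv _
        gelfand_initial_limits[OF _ w_deriv[of 0] w'_cont w0 w'0] _ _ \<open>t > 0\<close>] k(2) alpha_pos \<open>n \<ge> 2\<close>
    by (simp add: gelfand_lambda_def)
  moreover have "gelfand_lambda \<alpha> w t > 0" using \<open>t > 0\<close> by (simp add: gelfand_lambda_def)
  ultimately show "deriv (gelfand_lambda \<alpha> w) t > 0"
    using DERIV_imp_deriv[OF dlambda[OF \<open>t > 0\<close>]] \<open>t > 0\<close> by simp
qed

end
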